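(* Let $K$ be a field of prime characteristic $p$ and $C$ a cyclic $p$-group of order $q$. For each integer $n\ge0$, $\Lambda^n(V_q)\in P_{KC}$, and $\alpha_1(\Lambda^n(V_q))=1$ if $n=0$ or $n=q$, and $\alpha_1(\Lambda^n(V_q))=0$ otherwise.
   Context: The indecomposable $KC$-modules up to isomorphism are $V_1,\dots,V_q$ with $\dim V_r=r$ ($V_q$ is the regular module); $R_{KC}$ is the Green ring with $\mathbb{Z}$-basis $V_1,\dots,V_q$ (addition from direct sum, multiplication from tensor product). $\Lambda^n$ is the $n$th exterior power. $P_{KC}$ is the $\mathbb{Z}$-span in $R_{KC}$ of all permutation modules for $C$ over $K$. For $A=\sum_i\alpha_i(A)V_i$, $\alpha_1(A)$ is the coefficient of $V_1$. *)

theory Defs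
  imports "Jordan_Normal_Form.Jordan_Normal_Form_Uniqueness" "Jordan_Normal_Form.DL_Rank_Submatrix"
    "HOL-Combinatorics.Permutations"
begin

text \<open>A finite-dimensional KC-module, C = <g> cyclic of order q, is represented by the
  square matrix of the generator g acting on column vectors.\<close>

text \<open>Permutation module K[X] of a finite C-set X = {0..<m}, g acting by sigma:
  g e_j = e_(sigma j).\<close>
definition perm_mat :: "nat \<Rightarrow> (nat \<Rightarrow> nat) \<Rightarrow> 'a :: field mat" where
  "perm_mat m \<sigma> = mat m m (\<lambda>(i,j). if \<sigma> j = i then 1 else 0)"

definition is_C_set :: "nat \<Rightarrow> nat \<Rightarrow> (nat \<Rightarrow> nat) \<Rightarrow> bool" where
  "is_C_set q m \<sigma> \<longleftrightarrow> \<sigma> permutes {..<m} \<and> (\<forall>x<m. (\<sigma> ^^ q) x = x)"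

text \<open>The regular module V_q = KC: C acting on itself, g acting as the q-cycle.\<close>
definition regular_mat :: "nat \<Rightarrow> 'a :: field mat" where
  "regular_mat q = perm_mat q (\<lambda>i. if i < q then (i + 1) mod q else i)"

text \<open>n-th exterior power: basis e_S (S an n-subset of {0..<d}, ordered as increasing lists),
  g acting by the n-th compound matrix (minors).\<close>
definition nsubsets :: "nat \<Rightarrow> nat \<Rightarrow> nat list list" where
  "nsubsets n d = filter (\<lambda>s. length s = n) (subseqs [0..<d])"

definition ext_pow :: "nat \<Rightarrow> 'a :: field mat \<Rightarrow> 'a mat" where
  "ext_pow n A = (let S = nsubsets n (dim_row A) in
     mat (length S) (length S)
       (\<lambda>(i,j). det (submatrix A (set (S ! i)) (set (S ! j)))))"

text \<open>green A f: the module A decomposes as the direct sum of the indecomposables V_r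
  (V_r = Jordan block of size r with eigenvalue 1), V_r occurring with multiplicity f r;
  i.e. f is the element of the Green ring R_KC given by A (coefficient alpha_r = f r).\<close>
definition green :: "'a :: field mat \<Rightarrow> (nat \<Rightarrow> int) \<Rightarrow> bool" where
  "green A f \<longleftrightarrow> (\<exists>n_as. jordan_nf A n_as \<and> (\<forall>(k,a)\<in>set n_as. a = 1) \<and>
      (\<forall>r. f r = int (length (filter (\<lambda>(k,a). k = r) n_as))))"

text \<open>P_KC: the Z-span in R_KC of the permutation modules.\<close>
definition in_PKC :: "'a :: field itself \<Rightarrow> nat \<Rightarrow> (nat \<Rightarrow> int) \<Rightarrow> bool" where
  "in_PKC _ q f \<longleftrightarrow> (\<exists>ms :: (int \<times> nat \<times> (nat \<Rightarrow> nat)) list. \<exists>gs.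
      length gs = length ms \<and>
      (\<forall>i<length ms. is_C_set q (fst (snd (ms ! i))) (snd (snd (ms ! i))) \<and>
         green (perm_mat (fst (snd (ms ! i))) (snd (snd (ms ! i))) :: 'a mat) (gs ! i)) \<and>
      (\<forall>r. f r = (\<Sum>i<length ms. fst (ms ! i) * (gs ! i) r)))"

end

theory Submission
  imports Defs "HOL-Combinatorics.Cycles" "HOL-Library.Sublist"
begin

(* Over a field of
   characteristic p, a cycle of p-power length L is similar to the unipotent Jordan block of
   size L: the binomial matrix (t choose i) intertwines them, since (L choose i) vanishes for
   0 < i < L. Hence a permutation module of C is the direct sum of the V_L over its orbits,
   and alpha_1 counts the fixed points.
   The minor of the q-cycle on rows I and columns J is nonzero only if I is the cyclic shift
   of J, and then it is +1 or -1. So Lambda^n(V_q) is the permutation module of C acting on the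
   n-subsets of {0..<q} up to a diagonal sign change, which can be conjugated away because q is
   odd or -1 = 1. The only n-subsets fixed by the shift are the empty set and the whole set. *)

(* HOL-Algebra's notation for group inverses would otherwise capture the function inverse inv. *)
unbundle no m_inv_syntax

section \<open>Permutation matrices\<close>

lemma perm_mat_carrier [simp]:
  "perm_mat m f \<in> carrier_mat m m" "dim_row (perm_mat m f) = m" "dim_col (perm_mat m f) = m"
  by (auto simp: perm_mat_def)

lemma perm_mat_index [simp]:
  "i < m \<Longrightarrow> j < m \<Longrightarrow> perm_mat m f $$ (i,j) = (if f j = i then 1 else 0)"
  by (simp add: perm_mat_def)

lemma perm_mat_cong: "(\<And>x. x < m \<Longrightarrow> f x = g x) \<Longrightarrow> perm_mat m f = perm_mat m g"
  by (rule eq_matI) auto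

lemma perm_mat_id: "perm_mat m id = (1\<^sub>m m :: 'a::field mat)"
  by (rule eq_matI) auto

lemma perm_mat_mult:
  assumes "\<beta> permutes {..<m}"
  shows "perm_mat m \<alpha> * perm_mat m \<beta> = (perm_mat m (\<alpha> \<circ> \<beta>) :: 'a::field mat)"
proof (rule eq_matI)
  fix i j assume "i < dim_row (perm_mat m (\<alpha> \<circ> \<beta>) :: 'a mat)" "j < dim_col (perm_mat m (\<alpha> \<circ> \<beta>) :: 'a mat)"
  hence i: "i < m" and j: "j < m" by auto
  have \<beta>j: "\<beta> j < m" using permutes_in_image[OF assms] j by simp
  have "(perm_mat m \<alpha> * perm_mat m \<beta> :: 'a mat) $$ (i,j)
      = (\<Sum>c = 0..<m. (if \<alpha> c = i then 1 else 0) * (if \<beta> j = c then 1 else 0))"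
    using i j by (simp add: scalar_prod_def)
  also have "\<dots> = (\<Sum>c = 0..<m. if c = \<beta> j then (if \<alpha> c = i then 1 else 0) else 0)"
    by (rule sum.cong) auto
  also have "\<dots> = perm_mat m (\<alpha> \<circ> \<beta>) $$ (i,j)" using i j \<beta>j by simp
  finally show "(perm_mat m \<alpha> * perm_mat m \<beta> :: 'a mat) $$ (i,j) = perm_mat m (\<alpha> \<circ> \<beta>) $$ (i,j)" .
qed auto

lemma similar_perm_mat_conj:
  assumes \<tau>: "\<tau> permutes {..<m}" and \<rho>: "\<rho> permutes {..<m}"
  shows "similar_mat (perm_mat m \<tau> :: 'a::field mat) (perm_mat m (inv \<rho> \<circ> \<tau> \<circ> \<rho>))"
proof -
  have inv\<rho>: "inv \<rho> permutes {..<m}" using permutes_inv[OF \<rho>] .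
  have conj: "inv \<rho> \<circ> \<tau> \<circ> \<rho> permutes {..<m}"
    by (intro permutes_compose \<rho> \<tau> inv\<rho>)
  have inverse: "perm_mat m \<rho> * perm_mat m (inv \<rho>) = (1\<^sub>m m :: 'a mat)"
    "perm_mat m (inv \<rho>) * perm_mat m \<rho> = (1\<^sub>m m :: 'a mat)"
    by (simp_all only: perm_mat_mult[OF inv\<rho>] perm_mat_mult[OF \<rho>] permutes_inv_o[OF \<rho>] perm_mat_id)
  have "perm_mat m \<tau> = (perm_mat m \<rho> * perm_mat m (inv \<rho> \<circ> \<tau> \<circ> \<rho>) * perm_mat m (inv \<rho>) :: 'a mat)"
    unfolding perm_mat_mult[OF conj] perm_mat_mult[OF inv\<rho>]
    by (rule perm_mat_cong) (simp add: permutes_inverses[OF \<rho>])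
  from similar_mat_witI[OF inverse this] have "similar_mat_wit (perm_mat m \<tau> :: 'a mat)
      (perm_mat m (inv \<rho> \<circ> \<tau> \<circ> \<rho>)) (perm_mat m \<rho>) (perm_mat m (inv \<rho>))"
    by simp
  thus ?thesis unfolding similar_mat_def by blast
qed

definition perm_tail :: "nat \<Rightarrow> (nat \<Rightarrow> nat) \<Rightarrow> nat \<Rightarrow> nat" where
  "perm_tail L \<sigma> y = \<sigma> (y + L) - L"

lemma permutes_stable_complement:
  fixes \<sigma> :: "nat \<Rightarrow> nat"
  assumes \<sigma>: "\<sigma> permutes {..<m}" and L: "\<And>i. i < L \<Longrightarrow> \<sigma> i < L" and "L \<le> i"
  shows "L \<le> \<sigma> i"
proof (rule ccontr)
  assume "\<not> L \<le> \<sigma> i"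
  have inj: "inj \<sigma>" using permutes_inj[OF \<sigma>] .
  have "\<sigma> ` {..<L} = {..<L}"
    by (rule endo_inj_surj) (use L inj_on_subset[OF inj] in auto)
  with \<open>\<not> L \<le> \<sigma> i\<close> have "\<sigma> i \<in> \<sigma> ` {..<L}" by simp
  then obtain j where "j < L" "\<sigma> i = \<sigma> j" by auto
  with \<open>L \<le> i\<close> show False unfolding inj_eq[OF inj] by simp
qed

lemma perm_tail_add:
  assumes "\<sigma> permutes {..<m}" "\<And>i. i < L \<Longrightarrow> \<sigma> i < L"
  shows "perm_tail L \<sigma> y + L = \<sigma> (y + L)"
  using permutes_stable_complement[OF assms, of "y + L"] by (simp add: perm_tail_def)

lemma funpow_perm_tail_add:
  assumes "\<sigma> permutes {..<m}" "\<And>i. i < L \<Longrightarrow> \<sigma> i < L"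
  shows "(perm_tail L \<sigma> ^^ k) y + L = (\<sigma> ^^ k) (y + L)"
  by (induction k) (simp_all add: perm_tail_add[OF assms])

lemma perm_tail_permutes:
  assumes \<sigma>: "\<sigma> permutes {..<m}" and L: "\<And>i. i < L \<Longrightarrow> \<sigma> i < L"
  shows "perm_tail L \<sigma> permutes {..<m - L}"
proof (rule inj_imp_permutes)
  note add = perm_tail_add[OF assms]
  show "inj_on (perm_tail L \<sigma>) {..<m - L}"
  proof (rule inj_onI)
    fix x y assume "perm_tail L \<sigma> x = perm_tail L \<sigma> y"
    hence "\<sigma> (x + L) = \<sigma> (y + L)" using add[of x] add[of y] by simp
    thus "x = y" using inj_eq[OF permutes_inj[OF \<sigma>]] by simp
  qed
  show "perm_tail L \<sigma> y \<in> {..<m - L}" if "y \<in> {..<m - L}" for y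
  proof -
    have "\<sigma> (y + L) < m" using permutes_in_image[OF \<sigma>, of "y + L"] that by simp
    thus ?thesis using add[of y] by simp
  qed
  show "perm_tail L \<sigma> y = y" if "y \<notin> {..<m - L}" for y
  proof -
    have "\<sigma> (y + L) = y + L" using permutes_not_in[OF \<sigma>, of "y + L"] that by simp
    thus ?thesis using add[of y] by simp
  qed
qed simp

lemma perm_mat_four_block:
  assumes \<sigma>: "\<sigma> permutes {..<m}" and L: "\<And>i. i < L \<Longrightarrow> \<sigma> i < L" and "L \<le> m"
  shows "perm_mat m \<sigma> = four_block_mat (perm_mat L \<sigma>) (0\<^sub>m L (m - L)) (0\<^sub>m (m - L) L)
    (perm_mat (m - L) (perm_tail L \<sigma>) :: 'a::field mat)" (is "_ = ?B")
proof (rule eq_matI)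
  fix i j assume "i < dim_row ?B" "j < dim_col ?B"
  hence i: "i < m" and j: "j < m" using \<open>L \<le> m\<close> by auto
  show "perm_mat m \<sigma> $$ (i, j) = ?B $$ (i, j)"
  proof (cases "j < L")
    case True
    thus ?thesis using i j L[OF True] \<open>L \<le> m\<close> by (cases "i < L") simp_all
  next
    case False
    have "perm_tail L \<sigma> (j - L) + L = \<sigma> j" using perm_tail_add[OF \<sigma> L, of "j - L"] False by simp
    moreover have "L \<le> \<sigma> j" using permutes_stable_complement[OF \<sigma> L] False by simp
    ultimately show ?thesis using i j False \<open>L \<le> m\<close> by (cases "i < L") auto
  qed
qed (use \<open>L \<le> m\<close> in simp_all)

section \<open>Cycles of prime power length\<close>

lemma prime_power_dvd_choose:
  assumes p: "prime (p::nat)" and i: "0 < i" "i < p ^ j"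
  shows "p dvd (p ^ j choose i)"
proof (rule ccontr)
  assume nd: "\<not> p dvd (p ^ j choose i)"
  obtain i' where i': "i = Suc i'" using i by (cases i) auto
  obtain L' where L': "p ^ j = Suc L'" using i by (cases "p ^ j") auto
  have eq: "p ^ j * (L' choose i') = (p ^ j choose i) * i"
    using Suc_times_binomial_eq[of L' i'] unfolding i' L' by simp
  have "coprime (p ^ j) (p ^ j choose i)" using nd p by (simp add: prime_imp_coprime)
  moreover have "p ^ j dvd (p ^ j choose i) * i" unfolding eq[symmetric] by simp
  ultimately have "p ^ j dvd i" using coprime_dvd_mult_right_iff by blast
  with i show False by (simp add: nat_dvd_not_less)
qed

lemma similar_mat_intertwined:
  assumes A: "A \<in> carrier_mat n n" and B: "B \<in> carrier_mat n n" and M: "M \<in> carrier_mat n n"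
    and det: "det M \<noteq> (0::'a::field)" and AM: "A * M = M * B"
  shows "similar_mat A B"
proof -
  from det_non_zero_imp_unit[OF M det, of undefined]
  obtain M' where M': "M' \<in> carrier_mat n n" "M * M' = 1\<^sub>m n" "M' * M = 1\<^sub>m n"
    unfolding Units_def by (auto simp: ring_mat_simps)
  have "A = A * (M * M')" using A M' by simp
  also have "\<dots> = A * M * M'" using A M M' by (simp add: assoc_mult_mat[of _ n n _ n _ n])
  also have "\<dots> = M * B * M'" unfolding AM ..
  finally have "similar_mat_wit A B M M'" using A B M M' by (intro similar_mat_witI) auto
  thus ?thesis unfolding similar_mat_def by blast
qed

definition binomial_mat :: "nat \<Rightarrow> 'a::semiring_1 mat" where
  "binomial_mat L = mat L L (\<lambda>(t,i). of_nat (t choose i))"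

lemma binomial_mat_carrier [simp]:
  "binomial_mat L \<in> carrier_mat L L" "dim_row (binomial_mat L) = L" "dim_col (binomial_mat L) = L"
  by (simp_all add: binomial_mat_def)

lemma det_binomial_mat: "det (binomial_mat L :: 'a::comm_ring_1 mat) = 1"
proof -
  have "det (binomial_mat L :: 'a mat) = prod_list (diag_mat (binomial_mat L))"
    by (rule det_lower_triangular[OF _ binomial_mat_carrier(1)]) (simp add: binomial_mat_def binomial_eq_0)
  also have "\<dots> = 1" unfolding binomial_mat_def diag_mat_def by (rule prod_list_neutral) auto
  finally show ?thesis .
qed

lemma perm_mat_mult_index:
  assumes B: "B \<in> carrier_mat m k" and t: "t < m" and i: "i < k" and "s < m"
    and f: "\<And>c. c < m \<Longrightarrow> f c = t \<longleftrightarrow> c = s"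
  shows "(perm_mat m f * (B :: 'a::field mat)) $$ (t,i) = B $$ (s, i)"
proof -
  have "(perm_mat m f * B) $$ (t,i) = (\<Sum>c = 0..<m. (if f c = t then 1 else 0) * B $$ (c, i))"
    using B t i by (simp add: scalar_prod_def)
  also have "\<dots> = (\<Sum>c = 0..<m. if c = s then B $$ (c, i) else 0)"
    by (rule sum.cong) (auto simp: f)
  also have "\<dots> = B $$ (s, i)" using \<open>s < m\<close> by simp
  finally show ?thesis .
qed

(* Pascal's rule gives the identity in every row except the one where the cycle wraps around,
   which needs (L choose i) = 0 for 0 < i < L. *)
lemma perm_mat_down_cycle_binomial_mat:
  assumes p: "prime (CHAR('a::field))" and L: "L = CHAR('a) ^ j"
  shows "perm_mat L (\<lambda>t. (t + L - 1) mod L) * binomial_mat L = binomial_mat L * (jordan_block L 1 :: 'a mat)"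
proof (rule eq_matI)
  let ?M = "binomial_mat L :: 'a mat"
  have L0: "0 < L" using L p by (simp add: prime_gt_0_nat)
  fix t i assume "t < dim_row (?M * jordan_block L 1)" "i < dim_col (?M * jordan_block L 1)"
  hence t: "t < L" and i: "i < L" by auto
  have "(perm_mat L (\<lambda>t. (t + L - 1) mod L) * ?M) $$ (t,i) = ?M $$ (Suc t mod L, i)"
  proof (rule perm_mat_mult_index[OF binomial_mat_carrier(1) t i])
    fix c assume "c < L"
    thus "(c + L - 1) mod L = t \<longleftrightarrow> c = Suc t mod L"
      using t L0 by (cases c) (auto simp: mod_Suc)
  qed (use L0 in simp)
  also have "\<dots> = of_nat ((Suc t mod L) choose i)" using L0 i by (simp add: binomial_mat_def)
  finally have left: "(perm_mat L (\<lambda>t. (t + L - 1) mod L) * ?M) $$ (t,i) = of_nat ((Suc t mod L) choose i)" .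
  have "(?M * jordan_block L 1) $$ (t,i) = (\<Sum>c = 0..<L. ?M $$ (t,c) * jordan_block L 1 $$ (c,i))"
    using t i by (simp add: scalar_prod_def)
  also have "\<dots> = (\<Sum>c = 0..<L. (if c = i then ?M $$ (t,c) else 0) + (if Suc c = i then ?M $$ (t,c) else 0))"
    by (rule sum.cong) (use i in auto)
  also have "\<dots> = of_nat (t choose i) + (if 0 < i then of_nat (t choose (i - 1)) else 0)"
    unfolding sum.distrib using t i by (cases i) (auto simp: binomial_mat_def)
  finally have right: "(?M * jordan_block L 1) $$ (t,i)
      = of_nat (t choose i) + (if 0 < i then of_nat (t choose (i - 1)) else 0)" .
  have wrap: "(of_nat (L choose i) :: 'a) = 0" if "0 < i"
    using prime_power_dvd_choose[OF p that i[unfolded L]] unfolding L[symmetric]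
    by (simp add: of_nat_eq_0_iff_char_dvd)
  show "(perm_mat L (\<lambda>t. (t + L - 1) mod L) * ?M) $$ (t,i) = (?M * jordan_block L 1) $$ (t,i)"
    unfolding left right
  proof (cases "Suc t = L")
    case True
    thus "(of_nat ((Suc t mod L) choose i) :: 'a) = of_nat (t choose i) + (if 0 < i then of_nat (t choose (i - 1)) else 0)"
      using wrap by (cases i) (auto simp flip: of_nat_add simp: add.commute)
  next
    case False
    thus "(of_nat ((Suc t mod L) choose i) :: 'a) = of_nat (t choose i) + (if 0 < i then of_nat (t choose (i - 1)) else 0)"
      using t by (cases i) auto
  qed
qed auto

lemma down_cycle_similar_jordan_block:
  assumes "prime (CHAR('a::field))" and "L = CHAR('a) ^ j"
  shows "similar_mat (perm_mat L (\<lambda>t. (t + L - 1) mod L) :: 'a mat) (jordan_block L 1)"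
  by (rule similar_mat_intertwined[OF _ _ binomial_mat_carrier(1) _ perm_mat_down_cycle_binomial_mat[OF assms]])
    (simp_all add: det_binomial_mat)

section \<open>Jordan normal form of permutation modules\<close>

lemma jordan_nf_similar: "similar_mat A B \<Longrightarrow> jordan_nf B n_as \<Longrightarrow> jordan_nf A n_as"
  unfolding jordan_nf_def using similar_mat_trans by blast

lemma jordan_nf_perm_mat_0: "jordan_nf (perm_mat 0 \<tau> :: 'a::field mat) []"
proof -
  have "perm_mat 0 \<tau> = (jordan_matrix [] :: 'a mat)" by (rule eq_matI) auto
  thus ?thesis unfolding jordan_nf_def
    using similar_mat_refl[OF jordan_matrix_carrier[of "[] :: (nat \<times> 'a) list"]] by simp
qed

lemma jordan_nf_four_block_Cons:
  assumes A: "A \<in> carrier_mat L L" and AJ: "similar_mat A (jordan_block L a)" and "0 < L"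
    and B: "B \<in> carrier_mat n n" and jnf: "jordan_nf B bs"
  shows "jordan_nf (four_block_mat A (0\<^sub>m L n) (0\<^sub>m n L) B) ((L, a) # bs)"
proof -
  have BJ: "similar_mat B (jordan_matrix bs)" and bs0: "0 \<notin> fst ` set bs"
    using jnf unfolding jordan_nf_def by auto
  from similar_matD[OF BJ] obtain k where "B \<in> carrier_mat k k" "jordan_matrix bs \<in> carrier_mat k k"
    by blast
  with B have "sum_list (map fst bs) = n" unfolding carrier_mat_def by auto
  hence "jordan_matrix ((L, a) # bs) = four_block_mat (jordan_block L a) (0\<^sub>m L n) (0\<^sub>m n L) (jordan_matrix bs)"
    by (simp only: jordan_matrix_Cons)
  with similar_mat_four_block_0_0[OF AJ BJ A B] bs0 \<open>0 < L\<close> show ?thesis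
    unfolding jordan_nf_def by simp
qed

lemma extend_to_permutes:
  fixes f :: "nat \<Rightarrow> nat"
  assumes inj: "inj_on f {..<L}" and into: "f ` {..<L} \<subseteq> {..<m}"
  obtains \<rho> where "\<rho> permutes {..<m}" "\<And>i. i < L \<Longrightarrow> \<rho> i = f i"
proof -
  have "L \<le> m" using card_inj_on_le[OF inj into] by simp
  have "card {L..<m} = card ({..<m} - f ` {..<L})"
    using into card_image[OF inj] by (simp add: card_Diff_subset)
  then obtain h where h: "bij_betw h {L..<m} ({..<m} - f ` {..<L})"
    using finite_same_card_bij[of "{L..<m}" "{..<m} - f ` {..<L}"] by auto
  define \<rho> where "\<rho> i = (if i < L then f i else if i < m then h i else i)" for i
  have "bij_betw (\<lambda>i. if i \<in> {..<L} then f i else h i) ({..<L} \<union> {L..<m}) (f ` {..<L} \<union> ({..<m} - f ` {..<L}))"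
    by (rule bij_betw_disjoint_Un[OF _ h]) (use inj in \<open>auto simp: bij_betw_def\<close>)
  moreover have "{..<L} \<union> {L..<m} = {..<m}" "f ` {..<L} \<union> ({..<m} - f ` {..<L}) = {..<m}"
    using \<open>L \<le> m\<close> into by auto
  ultimately have "bij_betw (\<lambda>i. if i < L then f i else h i) {..<m} {..<m}" by simp
  hence "bij_betw \<rho> {..<m} {..<m}" by (rule bij_betw_cong[THEN iffD1, rotated]) (simp add: \<rho>_def)
  hence "\<rho> permutes {..<m}" by (rule bij_imp_permutes) (use \<open>L \<le> m\<close> in \<open>simp add: \<rho>_def\<close>)
  thus thesis using that by (simp add: \<rho>_def)
qed

lemma funpow_least_period:
  assumes "(f ^^ q) x = x" and "0 < q"
  obtains L where "0 < L" "L dvd q" "(f ^^ L) x = x" "\<And>l. 0 < l \<Longrightarrow> l < L \<Longrightarrow> (f ^^ l) x \<noteq> x"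
proof -
  define L where "L = (LEAST l. 0 < l \<and> (f ^^ l) x = x)"
  have "0 < L \<and> (f ^^ L) x = x"
    unfolding L_def by (rule LeastI[of _ q]) (use assms in simp)
  hence L: "0 < L" "(f ^^ L) x = x" by auto
  have least: "(f ^^ l) x \<noteq> x" if "0 < l" "l < L" for l
    using not_less_Least[of l "\<lambda>l. 0 < l \<and> (f ^^ l) x = x"] that unfolding L_def by auto
  have "(f ^^ (q mod L)) x = x" using assms(1) funpow_mod_eq[OF L(2)] by simp
  hence "L dvd q" using least[of "q mod L"] L(1) by (auto simp: dvd_eq_mod_eq_0)
  from that[OF L(1) this L(2) least] show thesis .
qed

(* The orbit of 0 is listed backwards, so that the conjugated permutation acts on {..<L}
   as the downward cycle of down_cycle_similar_jordan_block. *)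
lemma C_set_split_cycle:
  assumes \<tau>: "is_C_set q m \<tau>" and "0 < m" "0 < q"
  obtains L \<rho> where "0 < L" "L \<le> m" "L dvd q" "\<rho> permutes {..<m}"
    "\<And>i. i < L \<Longrightarrow> inv \<rho> (\<tau> (\<rho> i)) = (i + L - 1) mod L"
proof -
  have perm: "\<tau> permutes {..<m}" and per: "(\<tau> ^^ q) 0 = 0" using \<tau> \<open>0 < m\<close> by (auto simp: is_C_set_def)
  obtain L where L: "0 < L" "L dvd q" "(\<tau> ^^ L) 0 = 0" and least: "\<And>l. 0 < l \<Longrightarrow> l < L \<Longrightarrow> (\<tau> ^^ l) 0 \<noteq> 0"
    using funpow_least_period[OF per \<open>0 < q\<close>] by blast
  define f where "f i = (\<tau> ^^ (L - 1 - i)) 0" for i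
  have "inj_on ((\<lambda>k. (\<tau> ^^ k) 0) \<circ> (\<lambda>i. L - 1 - i)) {..<L}"
    using inj_on_funpow_least[OF L(3) least] by (intro comp_inj_on) (auto simp: inj_on_def)
  hence inj: "inj_on f {..<L}" unfolding f_def[abs_def] by (simp add: o_def)
  have into: "f ` {..<L} \<subseteq> {..<m}"
    using permutes_in_image[OF permutes_funpow[OF perm]] \<open>0 < m\<close> by (auto simp: f_def)
  have "L \<le> m" using card_inj_on_le[OF inj into] by simp
  from inj into obtain \<rho> where \<rho>: "\<rho> permutes {..<m}" and \<rho>f: "\<And>i. i < L \<Longrightarrow> \<rho> i = f i"
    using extend_to_permutes by blast
  have \<tau>f: "\<tau> (f i) = f ((i + L - 1) mod L)" if "i < L" for i
  proof (cases i)
    case 0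
    thus ?thesis using L by (cases L) (simp_all add: f_def)
  next
    case (Suc i')
    hence "L - 1 - i' = Suc (L - 1 - i)" and "(i + L - 1) mod L = i'" using that by auto
    thus ?thesis by (simp add: f_def)
  qed
  have "inv \<rho> (\<tau> (\<rho> i)) = (i + L - 1) mod L" if "i < L" for i
  proof -
    have "(i + L - 1) mod L < L" using L(1) by simp
    hence "\<tau> (\<rho> i) = \<rho> ((i + L - 1) mod L)" using \<tau>f[OF that] \<rho>f that by simp
    thus ?thesis by (simp add: permutes_inverses(2)[OF \<rho>])
  qed
  with L(1) \<open>L \<le> m\<close> L(2) \<rho> show thesis by (rule that)
qed

lemma is_C_set_conj:
  assumes \<tau>: "is_C_set q m \<tau>" and \<rho>: "\<rho> permutes {..<m}"
  shows "is_C_set q m (inv \<rho> \<circ> \<tau> \<circ> \<rho>)"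
proof -
  have pow: "((inv \<rho> \<circ> \<tau> \<circ> \<rho>) ^^ k) x = inv \<rho> ((\<tau> ^^ k) (\<rho> x))" for k x
    by (induction k) (simp_all add: permutes_inverses[OF \<rho>])
  have "((inv \<rho> \<circ> \<tau> \<circ> \<rho>) ^^ q) x = x" if "x < m" for x
  proof -
    have "\<rho> x < m" using permutes_in_image[OF \<rho>, of x] that by simp
    thus ?thesis using \<tau> unfolding pow is_C_set_def by (simp add: permutes_inverses[OF \<rho>])
  qed
  moreover have "inv \<rho> \<circ> \<tau> \<circ> \<rho> permutes {..<m}"
    using \<tau> \<rho> by (intro permutes_compose permutes_inv) (simp_all add: is_C_set_def)
  ultimately show ?thesis by (simp add: is_C_set_def)
qed

lemma is_C_set_perm_tail:
  assumes \<sigma>: "is_C_set q m \<sigma>" and L: "\<And>i. i < L \<Longrightarrow> \<sigma> i < L"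
  shows "is_C_set q (m - L) (perm_tail L \<sigma>)"
proof -
  have perm: "\<sigma> permutes {..<m}" using \<sigma> by (simp add: is_C_set_def)
  have "(perm_tail L \<sigma> ^^ q) y + L = y + L" if "y < m - L" for y
    using funpow_perm_tail_add[OF perm L, of q y] \<sigma> that by (simp add: is_C_set_def)
  thus ?thesis using perm_tail_permutes[OF perm L] by (simp add: is_C_set_def)
qed

lemma card_fixpoints_conj:
  assumes \<rho>: "\<rho> permutes {..<m}"
  shows "card {x. x < m \<and> (inv \<rho> \<circ> \<tau> \<circ> \<rho>) x = x} = card {x. x < m \<and> \<tau> x = x}"
proof -
  have image: "\<rho> ` {x. x < m \<and> (inv \<rho> \<circ> \<tau> \<circ> \<rho>) x = x} = {x. x < m \<and> \<tau> x = x}"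
  proof (intro equalityI subsetI)
    fix y assume "y \<in> {x. x < m \<and> \<tau> x = x}"
    moreover have "inv \<rho> y < m \<longleftrightarrow> y < m" using permutes_in_image[OF permutes_inv[OF \<rho>]] by simp
    ultimately show "y \<in> \<rho> ` {x. x < m \<and> (inv \<rho> \<circ> \<tau> \<circ> \<rho>) x = x}"
      by (intro image_eqI[of _ _ "inv \<rho> y"]) (simp_all add: permutes_inverses[OF \<rho>])
  next
    fix y assume "y \<in> \<rho> ` {x. x < m \<and> (inv \<rho> \<circ> \<tau> \<circ> \<rho>) x = x}"
    then obtain x where "x < m" "inv \<rho> (\<tau> (\<rho> x)) = x" "y = \<rho> x" by auto
    thus "y \<in> {x. x < m \<and> \<tau> x = x}"
      using permutes_in_image[OF \<rho>, of x] by (auto simp: permutes_inv_eq[OF \<rho>])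
  qed
  have "inj_on \<rho> {x. x < m \<and> (inv \<rho> \<circ> \<tau> \<circ> \<rho>) x = x}"
    using permutes_inj[OF \<rho>] by (rule inj_on_subset) simp
  from card_image[OF this] show ?thesis unfolding image by simp
qed

lemma card_fixpoints_four_block:
  assumes \<sigma>: "\<sigma> permutes {..<m}" and L: "\<And>i. i < L \<Longrightarrow> \<sigma> i < L" and "L \<le> m"
  shows "card {x. x < m \<and> \<sigma> x = x}
    = card {x. x < L \<and> \<sigma> x = x} + card {y. y < m - L \<and> perm_tail L \<sigma> y = y}"
proof -
  have "{x. x < m \<and> \<sigma> x = x} = {x. x < L \<and> \<sigma> x = x} \<union> (\<lambda>y. y + L) ` {y. y < m - L \<and> perm_tail L \<sigma> y = y}"
  proof (intro equalityI subsetI)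
    fix x assume x: "x \<in> {x. x < m \<and> \<sigma> x = x}"
    show "x \<in> {x. x < L \<and> \<sigma> x = x} \<union> (\<lambda>y. y + L) ` {y. y < m - L \<and> perm_tail L \<sigma> y = y}"
    proof (cases "x < L")
      case False
      hence "perm_tail L \<sigma> (x - L) = x - L" using x perm_tail_add[OF \<sigma> L, of "x - L"] by simp
      with False x show ?thesis by (intro UnI2 image_eqI[of _ _ "x - L"]) auto
    qed (use x in simp)
  next
    fix x assume "x \<in> {x. x < L \<and> \<sigma> x = x} \<union> (\<lambda>y. y + L) ` {y. y < m - L \<and> perm_tail L \<sigma> y = y}"
    thus "x \<in> {x. x < m \<and> \<sigma> x = x}"
    proof (elim UnE imageE)
      fix y assume "y \<in> {y. y < m - L \<and> perm_tail L \<sigma> y = y}" and x: "x = y + L"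
      hence "y + L < m" "perm_tail L \<sigma> y = y" by auto
      thus ?thesis using perm_tail_add[OF \<sigma> L, of y] x by simp
    qed (use \<open>L \<le> m\<close> in simp)
  qed
  moreover have "card ((\<lambda>y. y + L) ` {y. y < m - L \<and> perm_tail L \<sigma> y = y})
      = card {y. y < m - L \<and> perm_tail L \<sigma> y = y}"
    by (rule card_image) (simp add: inj_on_def)
  moreover have "{x. x < L \<and> \<sigma> x = x} \<inter> (\<lambda>y. y + L) ` {y. y < m - L \<and> perm_tail L \<sigma> y = y} = {}"
    by auto
  ultimately show ?thesis by (simp add: card_Un_disjoint)
qed

lemma card_fixpoints_down_cycle:
  fixes L :: nat
  shows  "card {x. x < L \<and> (x + L - 1) mod L = x} = (if L = 1 then 1 else 0 :: nat)"
proof -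
  have "{x. x < L \<and> (x + L - 1) mod L = x} = (if L = 1 then {0} else {})"
  proof (intro equalityI subsetI)
    fix x assume "x \<in> {x. x < L \<and> (x + L - 1) mod L = x}"
    hence "x < L" "(x + L - 1) mod L = x" by auto
    thus "x \<in> (if L = 1 then {0} else {})" by (cases x) (auto split: if_splits)
  qed (auto split: if_splits)
  thus ?thesis by simp
qed

lemma card_fixpoints_split_cycle:
  assumes \<sigma>: "\<sigma> permutes {..<m}" and "L \<le> m" and cycle: "\<And>i. i < L \<Longrightarrow> \<sigma> i = (i + L - 1) mod L"
  shows "card {x. x < m \<and> \<sigma> x = x}
    = (if L = 1 then 1 else 0) + card {y. y < m - L \<and> perm_tail L \<sigma> y = y}"
proof -
  have \<sigma>L: "\<sigma> i < L" if "i < L" for i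
    unfolding cycle[OF that] using that by (intro mod_less_divisor) simp
  have "{x. x < L \<and> \<sigma> x = x} = {x. x < L \<and> (x + L - 1) mod L = x}"
  proof (rule Collect_cong)
    fix x show "(x < L \<and> \<sigma> x = x) = (x < L \<and> (x + L - 1) mod L = x)"
      using cycle[of x] by (cases "x < L") simp_all
  qed
  thus ?thesis using card_fixpoints_four_block[OF \<sigma> \<sigma>L \<open>L \<le> m\<close>] card_fixpoints_down_cycle[of L] by simp
qed

lemma jordan_nf_perm_mat_split_cycle:
  assumes p: "prime (CHAR('a::field))" and L: "L = CHAR('a) ^ j" "L \<le> m"
    and \<sigma>: "\<sigma> permutes {..<m}" and cycle: "\<And>i. i < L \<Longrightarrow> \<sigma> i = (i + L - 1) mod L"
    and jnf: "jordan_nf (perm_mat (m - L) (perm_tail L \<sigma>) :: 'a mat) n_as"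
  shows "jordan_nf (perm_mat m \<sigma> :: 'a mat) ((L, 1) # n_as)"
proof -
  have "0 < L" using p L(1) by (simp add: prime_gt_0_nat)
  hence \<sigma>L: "\<sigma> i < L" if "i < L" for i using cycle[OF that] by simp
  have "perm_mat L \<sigma> = (perm_mat L (\<lambda>t. (t + L - 1) mod L) :: 'a mat)"
    by (rule perm_mat_cong) (simp add: cycle)
  hence head: "similar_mat (perm_mat L \<sigma> :: 'a mat) (jordan_block L 1)"
    using down_cycle_similar_jordan_block[OF p L(1)] by simp
  have "jordan_nf (four_block_mat (perm_mat L \<sigma>) (0\<^sub>m L (m - L)) (0\<^sub>m (m - L) L)
      (perm_mat (m - L) (perm_tail L \<sigma>)) :: 'a mat) ((L, 1) # n_as)"
    by (rule jordan_nf_four_block_Cons[OF _ head \<open>0 < L\<close> _ jnf]) simp_all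
  thus ?thesis by (simp only: perm_mat_four_block[OF \<sigma> \<sigma>L L(2)])
qed

theorem perm_mat_jordan_nf:
  assumes p: "prime (CHAR('a::field))" and q: "q = CHAR('a) ^ e" and \<tau>: "is_C_set q m \<tau>"
  shows "\<exists>n_as. jordan_nf (perm_mat m \<tau> :: 'a mat) n_as \<and> (\<forall>(k,a)\<in>set n_as. a = 1) \<and>
    length (filter (\<lambda>(k,a). k = 1) n_as) = card {x. x < m \<and> \<tau> x = x}"
  using \<tau>
proof (induction m arbitrary: \<tau> rule: less_induct)
  case (less m \<tau>)
  show ?case
  proof (cases "m = 0")
    case True
    thus ?thesis using jordan_nf_perm_mat_0[where 'a = 'a] by (intro exI[of _ "[]"]) auto
  next
    case False
    have "0 < q" using p q by (simp add: prime_gt_0_nat)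
    with less.prems False obtain L \<rho> where L: "0 < L" "L \<le> m" "L dvd q" and \<rho>: "\<rho> permutes {..<m}"
      and cycle: "\<And>i. i < L \<Longrightarrow> inv \<rho> (\<tau> (\<rho> i)) = (i + L - 1) mod L"
      by (elim C_set_split_cycle) auto
    define \<sigma> where "\<sigma> = inv \<rho> \<circ> \<tau> \<circ> \<rho>"
    have \<sigma>: "is_C_set q m \<sigma>" unfolding \<sigma>_def by (rule is_C_set_conj[OF less.prems \<rho>])
    hence \<sigma>perm: "\<sigma> permutes {..<m}" by (simp add: is_C_set_def)
    have \<sigma>cycle: "\<sigma> i = (i + L - 1) mod L" if "i < L" for i using cycle[OF that] by (simp add: \<sigma>_def)
    hence \<sigma>L: "\<sigma> i < L" if "i < L" for i using that L(1) by simp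
    obtain j where "L = CHAR('a) ^ j" using L(3) divides_primepow_nat[OF p] unfolding q by auto
    obtain n_as where jnf: "jordan_nf (perm_mat (m - L) (perm_tail L \<sigma>) :: 'a mat) n_as"
      and ev: "\<forall>(k,a)\<in>set n_as. a = 1"
      and cnt: "length (filter (\<lambda>(k,a). k = 1) n_as) = card {y. y < m - L \<and> perm_tail L \<sigma> y = y}"
      using less.IH[OF _ is_C_set_perm_tail[OF \<sigma> \<sigma>L]] L(1) False by auto
    have "jordan_nf (perm_mat m \<tau> :: 'a mat) ((L, 1) # n_as)"
      using less.prems jordan_nf_perm_mat_split_cycle[OF p \<open>L = CHAR('a) ^ j\<close> L(2) \<sigma>perm \<sigma>cycle jnf]
      unfolding \<sigma>_def is_C_set_def by (blast intro: jordan_nf_similar similar_perm_mat_conj[OF _ \<rho>])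
    moreover have "card {x. x < m \<and> \<tau> x = x}
        = (if L = 1 then 1 else 0) + card {y. y < m - L \<and> perm_tail L \<sigma> y = y}"
      using card_fixpoints_conj[OF \<rho>, of \<tau>, folded \<sigma>_def]
        card_fixpoints_split_cycle[OF \<sigma>perm L(2) \<sigma>cycle] by simp
    ultimately show ?thesis using ev cnt by (intro exI[of _ "(L, 1) # n_as"]) auto
  qed
qed

section \<open>Exterior powers of the regular module\<close>

definition cyclic_shift :: "nat \<Rightarrow> nat \<Rightarrow> nat" where
  "cyclic_shift q i = (if i < q then (i + 1) mod q else i)"

lemma regular_mat_cyclic_shift: "regular_mat q = perm_mat q (cyclic_shift q)"
  unfolding regular_mat_def cyclic_shift_def ..

lemma funpow_cyclic_shift: "x < q \<Longrightarrow> (cyclic_shift q ^^ k) x = (x + k) mod q"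
  by (induction k) (simp_all add: cyclic_shift_def mod_Suc_eq)

lemma cyclic_shift_permutes: "cyclic_shift q permutes {..<q}"
proof (rule inj_imp_permutes)
  have shift: "cyclic_shift q x = (if x + 1 = q then 0 else x + 1)" if "x < q" for x
    using that by (auto simp: cyclic_shift_def)
  show "inj_on (cyclic_shift q) {..<q}"
    by (rule inj_onI) (simp add: shift split: if_splits)
qed (auto simp: cyclic_shift_def)

lemma is_C_set_cyclic_shift: "is_C_set q q (cyclic_shift q)"
  by (simp add: is_C_set_def cyclic_shift_permutes funpow_cyclic_shift)

lemma cyclic_shift_invariant_subset:
  assumes A: "A \<subseteq> {..<q}" and inv: "cyclic_shift q ` A = A" and "A \<noteq> {}"
  shows "A = {..<q}"
proof -
  obtain x where x: "x \<in> A" using \<open>A \<noteq> {}\<close> by auto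
  with A have "x < q" by auto
  have powers: "(cyclic_shift q ^^ k) ` A = A" for k
  proof (induction k)
    case (Suc k)
    have "(cyclic_shift q ^^ Suc k) ` A = cyclic_shift q ` ((cyclic_shift q ^^ k) ` A)"
      by (simp add: image_image)
    with Suc show ?case by (simp add: inv)
  qed simp
  have "y \<in> A" if "y < q" for y
  proof -
    have "(cyclic_shift q ^^ (y + q - x)) x \<in> A" using powers x by blast
    moreover have "x + (y + q - x) = y + q" using \<open>x < q\<close> by simp
    ultimately show ?thesis using \<open>x < q\<close> \<open>y < q\<close> by (simp add: funpow_cyclic_shift)
  qed
  with A show ?thesis by auto
qed

lemma nsubsets_nth:
  assumes "j < length (nsubsets n d)"
  shows "sorted_wrt (<) (nsubsets n d ! j)" "set (nsubsets n d ! j) \<subseteq> {..<d}"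
    "length (nsubsets n d ! j) = n"
proof -
  have "nsubsets n d ! j \<in> set (nsubsets n d)" using assms by simp
  then obtain N where N: "nsubsets n d ! j = nths [0..<d] N" and "length (nsubsets n d ! j) = n"
    by (auto simp: nsubsets_def subseq_conv_nths)
  thus "sorted_wrt (<) (nsubsets n d ! j)" "set (nsubsets n d ! j) \<subseteq> {..<d}"
    "length (nsubsets n d ! j) = n"
    using set_nths_subset[of "[0..<d]" N] by (auto simp: strict_sorted_iff sorted_nths)
qed

definition nsubset :: "nat \<Rightarrow> nat \<Rightarrow> nat \<Rightarrow> nat set" where
  "nsubset n d j = set (nsubsets n d ! j)"

lemma bij_betw_nsubset:
  "bij_betw (nsubset n d) {..<length (nsubsets n d)} {X. X \<subseteq> {..<d} \<and> card X = n}"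
proof (rule bij_betw_imageI)
  have distinct: "distinct (map set (nsubsets n d))"
    unfolding nsubsets_def by (intro distinct_map_filter distinct_set_subseqs) simp
  show "inj_on (nsubset n d) {..<length (nsubsets n d)}"
  proof (rule inj_onI)
    fix i j assume "i \<in> {..<length (nsubsets n d)}" "j \<in> {..<length (nsubsets n d)}"
      and "nsubset n d i = nsubset n d j"
    thus "i = j" using nth_eq_iff_index_eq[OF distinct, of i j] by (simp add: nsubset_def)
  qed
  show "nsubset n d ` {..<length (nsubsets n d)} = {X. X \<subseteq> {..<d} \<and> card X = n}"
  proof (intro equalityI subsetI)
    fix X assume "X \<in> nsubset n d ` {..<length (nsubsets n d)}"
    then obtain j where "j < length (nsubsets n d)" "X = nsubset n d j" by auto
    with nsubsets_nth[OF this(1)] show "X \<in> {X. X \<subseteq> {..<d} \<and> card X = n}"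
      by (auto simp: nsubset_def strict_sorted_iff distinct_card)
  next
    fix X assume X: "X \<in> {X. X \<subseteq> {..<d} \<and> card X = n}"
    have "X \<in> set ` set (subseqs [0..<d])" using X subset_subseqs[of X "[0..<d]"] by (simp add: atLeast0LessThan)
    then obtain s where s: "s \<in> set (subseqs [0..<d])" "X = set s" by blast
    hence "length s = n" using X subseqs_distinctD[OF s(1)] by (simp add: distinct_card[symmetric])
    with s(1) have "s \<in> set (nsubsets n d)" by (simp add: nsubsets_def)
    then obtain j where "j < length (nsubsets n d)" "nsubsets n d ! j = s" by (auto simp: in_set_conv_nth)
    with s(2) show "X \<in> nsubset n d ` {..<length (nsubsets n d)}" by (auto simp: nsubset_def)
  qed
qed

definition nsubset_perm :: "nat \<Rightarrow> nat \<Rightarrow> (nat \<Rightarrow> nat) \<Rightarrow> nat \<Rightarrow> nat" where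
  "nsubset_perm n d \<pi> j = (if j < length (nsubsets n d)
     then inv_into {..<length (nsubsets n d)} (nsubset n d) (\<pi> ` nsubset n d j) else j)"

lemma nsubset_bounded:
  assumes "j < length (nsubsets n d)"
  shows "nsubset n d j \<subseteq> {..<d}" "card (nsubset n d j) = n"
  using bij_betw_apply[OF bij_betw_nsubset, of j n d] assms by auto

lemma nsubset_inj:
  "i < length (nsubsets n d) \<Longrightarrow> j < length (nsubsets n d) \<Longrightarrow> nsubset n d i = nsubset n d j \<Longrightarrow> i = j"
  using bij_betw_nsubset[of n d] by (auto simp: bij_betw_def inj_on_def)

lemma nsubset_perm_apply:
  assumes \<pi>: "\<pi> permutes {..<d}" and j: "j < length (nsubsets n d)"
  shows "nsubset_perm n d \<pi> j < length (nsubsets n d)"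
    "nsubset n d (nsubset_perm n d \<pi> j) = \<pi> ` nsubset n d j"
proof -
  note bounded = nsubset_bounded[OF j]
  have "\<pi> ` nsubset n d j \<subseteq> {..<d}" using bounded(1) permutes_image[OF \<pi>] by blast
  moreover have "card (\<pi> ` nsubset n d j) = n"
    using bounded(2) card_image[OF inj_on_subset[OF permutes_inj[OF \<pi>]]] by simp
  ultimately have img: "\<pi> ` nsubset n d j \<in> nsubset n d ` {..<length (nsubsets n d)}"
    using bij_betw_nsubset[of n d] by (simp add: bij_betw_def)
  show "nsubset_perm n d \<pi> j < length (nsubsets n d)"
    using inv_into_into[OF img] j by (simp add: nsubset_perm_def)
  show "nsubset n d (nsubset_perm n d \<pi> j) = \<pi> ` nsubset n d j"
    using f_inv_into_f[OF img] j by (simp add: nsubset_perm_def)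
qed

lemma funpow_nsubset_perm:
  assumes \<pi>: "\<pi> permutes {..<d}" and j: "j < length (nsubsets n d)"
  shows "(nsubset_perm n d \<pi> ^^ k) j < length (nsubsets n d)"
    "nsubset n d ((nsubset_perm n d \<pi> ^^ k) j) = (\<pi> ^^ k) ` nsubset n d j"
proof (induction k)
  case (Suc k)
  { case 1 show ?case using Suc nsubset_perm_apply[OF \<pi>] by simp }
  { case 2 show ?case using Suc nsubset_perm_apply[OF \<pi>] by (simp add: image_image) }
qed (use j in simp_all)

lemma is_C_set_nsubset_perm:
  assumes \<pi>: "is_C_set q d \<pi>"
  shows "is_C_set q (length (nsubsets n d)) (nsubset_perm n d \<pi>)"
proof -
  have perm: "\<pi> permutes {..<d}" using \<pi> by (simp add: is_C_set_def)
  have "nsubset_perm n d \<pi> permutes {..<length (nsubsets n d)}"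
  proof (rule inj_imp_permutes)
    show "inj_on (nsubset_perm n d \<pi>) {..<length (nsubsets n d)}"
    proof (rule inj_onI)
      fix i j assume i: "i \<in> {..<length (nsubsets n d)}" and j: "j \<in> {..<length (nsubsets n d)}"
        and "nsubset_perm n d \<pi> i = nsubset_perm n d \<pi> j"
      hence "\<pi> ` nsubset n d i = \<pi> ` nsubset n d j" using nsubset_perm_apply[OF perm] by (metis lessThan_iff)
      hence "nsubset n d i = nsubset n d j" using permutes_inj[OF perm] by (simp add: inj_image_eq_iff)
      thus "i = j" using nsubset_inj i j by simp
    qed
    show "nsubset_perm n d \<pi> j \<in> {..<length (nsubsets n d)}" if "j \<in> {..<length (nsubsets n d)}" for j
      using nsubset_perm_apply(1)[OF perm, of j] that by simp
  qed (simp_all add: nsubset_perm_def)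
  moreover have "(nsubset_perm n d \<pi> ^^ q) j = j" if j: "j < length (nsubsets n d)" for j
  proof -
    have "nsubset n d j \<subseteq> {..<d}" using nsubset_bounded[OF j] by simp
    hence "(\<pi> ^^ q) ` nsubset n d j = nsubset n d j" using \<pi> by (force simp: is_C_set_def)
    thus ?thesis using nsubset_inj funpow_nsubset_perm[OF perm j] j by metis
  qed
  ultimately show ?thesis by (simp add: is_C_set_def)
qed

lemma card_nsubset_Collect:
  "card {j. j < length (nsubsets n d) \<and> P (nsubset n d j)} = card {X. X \<subseteq> {..<d} \<and> card X = n \<and> P X}"
proof (rule bij_betw_same_card[OF bij_betw_imageI])
  note bij = bij_betw_nsubset[of n d]
  show "inj_on (nsubset n d) {j. j < length (nsubsets n d) \<and> P (nsubset n d j)}"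
    using bij unfolding bij_betw_def by (rule inj_on_subset[OF conjunct1]) auto
  show "nsubset n d ` {j. j < length (nsubsets n d) \<and> P (nsubset n d j)}
      = {X. X \<subseteq> {..<d} \<and> card X = n \<and> P X}"
  proof (intro equalityI subsetI)
    fix X assume X: "X \<in> {X. X \<subseteq> {..<d} \<and> card X = n \<and> P X}"
    hence "X \<in> nsubset n d ` {..<length (nsubsets n d)}" using bij_betw_imp_surj_on[OF bij] by auto
    then obtain j where "j < length (nsubsets n d)" "X = nsubset n d j" by auto
    with X show "X \<in> nsubset n d ` {j. j < length (nsubsets n d) \<and> P (nsubset n d j)}" by auto
  qed (auto dest: nsubset_bounded)
qed

lemma card_fixpoints_nsubset_perm_cyclic_shift:
  assumes "0 < q"
  shows "card {j. j < length (nsubsets n q) \<and> nsubset_perm n q (cyclic_shift q) j = j}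
    = (if n = 0 \<or> n = q then 1 else 0)"
proof -
  let ?N = "length (nsubsets n q)"
  have fix_iff: "nsubset_perm n q (cyclic_shift q) j = j \<longleftrightarrow> nsubset n q j \<in> {{}, {..<q}}"
    if j: "j < ?N" for j
  proof -
    note shift = nsubset_perm_apply[OF cyclic_shift_permutes j]
    have sub: "nsubset n q j \<subseteq> {..<q}" using nsubset_bounded[OF j] by simp
    have "nsubset_perm n q (cyclic_shift q) j = j \<longleftrightarrow> cyclic_shift q ` nsubset n q j = nsubset n q j"
      using nsubset_inj[OF shift(1) j] shift(2) by auto
    also have "\<dots> \<longleftrightarrow> nsubset n q j \<in> {{}, {..<q}}"
      using cyclic_shift_invariant_subset[OF sub] permutes_image[OF cyclic_shift_permutes]
        permutes_in_image[OF cyclic_shift_permutes] by auto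
    finally show ?thesis .
  qed
  have "{j. j < ?N \<and> nsubset_perm n q (cyclic_shift q) j = j} = {j. j < ?N \<and> nsubset n q j \<in> {{}, {..<q}}}"
    using fix_iff by auto
  hence "card {j. j < ?N \<and> nsubset_perm n q (cyclic_shift q) j = j}
      = card {X. X \<subseteq> {..<q} \<and> card X = n \<and> X \<in> {{}, {..<q}}}"
    using card_nsubset_Collect[of n q "\<lambda>X. X \<in> {{}, {..<q}}"] by simp
  also have "{X. X \<subseteq> {..<q} \<and> card X = n \<and> X \<in> {{}, {..<q}}}
      = (if n = 0 then {{}} else if n = q then {{..<q}} else {})"
    using \<open>0 < q\<close> by auto
  finally show ?thesis by simp
qed

lemma pick_sorted:
  assumes s: "sorted_wrt (<) (s :: nat list)" and "a < length s"
  shows "pick (set s) a = s ! a"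
  using \<open>a < length s\<close>
proof (induction a)
  case 0
  show ?case unfolding pick.simps
  proof (rule Least_equality)
    fix y assume "y \<in> set s"
    then obtain k where "k < length s" "y = s ! k" by (auto simp: in_set_conv_nth)
    thus "s ! 0 \<le> y" using sorted_wrt_nth_less[OF s, of 0 k] by (cases k) auto
  qed (use 0 in simp)
next
  case (Suc a)
  show ?case unfolding pick.simps Suc.IH[OF Suc_lessD[OF Suc.prems]]
  proof (rule Least_equality)
    show "s ! Suc a \<in> set s \<and> s ! a < s ! Suc a"
      using Suc.prems sorted_wrt_nth_less[OF s, of a "Suc a"] by auto
    fix y assume y: "y \<in> set s \<and> s ! a < y"
    then obtain k where k: "k < length s" "y = s ! k" by (auto simp: in_set_conv_nth)
    with y have "a < k" using sorted_wrt_nth_less[OF s, of k a] Suc.prems by (cases "k < a"; cases "k = a") auto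
    thus "s ! Suc a \<le> y" using sorted_wrt_nth_less[OF s, of "Suc a" k] k by (cases "k = Suc a") auto
  qed
qed

lemma submatrix_perm_mat:
  assumes I: "sorted_wrt (<) I" "set I \<subseteq> {..<m}" "length I = n"
    and J: "sorted_wrt (<) J" "set J \<subseteq> {..<m}" "length J = n"
  shows "submatrix (perm_mat m \<pi>) (set I) (set J)
    = (mat n n (\<lambda>(a,b). if \<pi> (J ! b) = I ! a then 1 else 0) :: 'a::field mat)"
proof -
  have card: "card {i. i < m \<and> i \<in> set K} = n" if "sorted_wrt (<) K" "set K \<subseteq> {..<m}" "length K = n" for K
  proof -
    have "{i. i < m \<and> i \<in> set K} = set K" using that(2) by auto
    thus ?thesis using that by (simp add: strict_sorted_iff distinct_card)
  qed
  show ?thesis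
  proof (rule eq_matI)
    fix a b assume "a < dim_row (mat n n (\<lambda>(a,b). if \<pi> (J ! b) = I ! a then 1 else 0) :: 'a mat)"
      and "b < dim_col (mat n n (\<lambda>(a,b). if \<pi> (J ! b) = I ! a then 1 else 0) :: 'a mat)"
    hence a: "a < n" and b: "b < n" by auto
    have "I ! a \<in> set I" "J ! b \<in> set J" using a b I(3) J(3) by simp_all
    hence "I ! a < m" "J ! b < m" using I(2) J(2) by auto
    moreover have "pick (set I) a = I ! a" "pick (set J) b = J ! b"
      using pick_sorted[OF I(1)] pick_sorted[OF J(1)] a b I(3) J(3) by simp_all
    moreover have "submatrix (perm_mat m \<pi>) (set I) (set J) $$ (a,b)
        = (perm_mat m \<pi> :: 'a mat) $$ (pick (set I) a, pick (set J) b)"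
      by (rule submatrix_index) (simp_all only: perm_mat_carrier card[OF I] card[OF J] a b)
    ultimately show "submatrix (perm_mat m \<pi>) (set I) (set J) $$ (a,b)
      = (mat n n (\<lambda>(a,b). if \<pi> (J ! b) = I ! a then 1 else 0) :: 'a mat) $$ (a,b)"
      using a b by simp
  qed (simp_all only: dim_submatrix perm_mat_carrier card[OF I] card[OF J] dim_row_mat dim_col_mat)
qed

lemma det_zero_column:
  assumes A: "(A :: 'a :: comm_ring_1 mat) \<in> carrier_mat n n" and "b < n"
    and zero: "\<And>a. a < n \<Longrightarrow> A $$ (a, b) = 0"
  shows "det A = 0"
  using laplace_expansion_column[OF assms(1,2)] zero by simp

lemma det_regular_mat:
  assumes "0 < n"
  shows "det (regular_mat n :: 'a :: field mat) = (-1) ^ (n - 1)"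
proof -
  let ?C = "regular_mat n :: 'a mat"
  have C: "?C \<in> carrier_mat n n" by (simp add: regular_mat_cyclic_shift)
  have "det ?C = (\<Sum>a<n. ?C $$ (a, n - 1) * cofactor ?C a (n - 1))"
    using laplace_expansion_column[OF C, of "n - 1"] \<open>0 < n\<close> by simp
  also have "\<dots> = (\<Sum>a<n. if a = 0 then cofactor ?C a (n - 1) else 0)"
    by (rule sum.cong) (auto simp: regular_mat_cyclic_shift cyclic_shift_def)
  also have "\<dots> = cofactor ?C 0 (n - 1)" using \<open>0 < n\<close> by simp
  also have "mat_delete ?C 0 (n - 1) = 1\<^sub>m (n - 1)"
    by (rule eq_matI) (auto simp: mat_delete_def regular_mat_cyclic_shift cyclic_shift_def)
  hence "cofactor ?C 0 (n - 1) = (-1) ^ (n - 1)" by (simp add: cofactor_def)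
  finally show ?thesis .
qed

lemma cyclic_shift_below: "x + 1 < q \<Longrightarrow> cyclic_shift q x = Suc x"
  by (simp add: cyclic_shift_def)

lemma submatrix_regular_mat_no_wrap:
  assumes I: "sorted_wrt (<) I" "set I \<subseteq> {..<q}" "length I = n"
    and J: "sorted_wrt (<) J" "set J \<subseteq> {..<q}" "length J = n"
    and image: "cyclic_shift q ` set J = set I" and no_wrap: "q - 1 \<notin> set J"
  shows "submatrix (regular_mat q) (set I) (set J) = (1\<^sub>m n :: 'a::field mat)"
proof -
  have shift: "cyclic_shift q x = Suc x" if "x \<in> set J" for x
  proof -
    have "x < q" "x \<noteq> q - 1" using that J(2) no_wrap by auto
    thus ?thesis by (intro cyclic_shift_below) linarith
  qed
  hence "set (map Suc J) = set I" using image by (auto simp: image_iff)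
  hence I_eq: "I = map Suc J"
    using strict_sorted_equal[OF _ I(1)] J(1) by (simp add: sorted_wrt_map)
  show ?thesis unfolding regular_mat_cyclic_shift submatrix_perm_mat[OF I J]
  proof (rule eq_matI)
    fix a b assume "a < dim_row (1\<^sub>m n :: 'a mat)" "b < dim_col (1\<^sub>m n :: 'a mat)"
    hence a: "a < n" and b: "b < n" by auto
    have "cyclic_shift q (J ! b) = I ! a \<longleftrightarrow> J ! b = J ! a"
      using shift[of "J ! b"] a b J(3) unfolding I_eq by simp
    also have "\<dots> \<longleftrightarrow> a = b" using J(1,3) a b by (auto simp: strict_sorted_iff nth_eq_iff_index_eq)
    finally show "mat n n (\<lambda>(a,b). if cyclic_shift q (J ! b) = I ! a then 1 else 0) $$ (a,b) = 1\<^sub>m n $$ (a,b)"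
      using a b by simp
  qed simp_all
qed

lemma strict_sorted_split_last:
  fixes J :: "nat list"
  assumes J: "sorted_wrt (<) J" "set J \<subseteq> {..<q}" and "q - 1 \<in> set J"
  shows "J = butlast J @ [q - 1]"
proof -
  have "J \<noteq> []" using \<open>q - 1 \<in> set J\<close> by auto
  hence split: "J = butlast J @ [last J]" by simp
  have "last J < q" using J(2) last_in_set[OF \<open>J \<noteq> []\<close>] by auto
  moreover have "x < last J" if "x \<in> set (butlast J)" for x
    using J(1) that by (subst (asm) split) (simp add: sorted_wrt_append)
  ultimately have "q - 1 \<notin> set (butlast J)" by fastforce
  hence "last J = q - 1" using \<open>q - 1 \<in> set J\<close> by (subst (asm) split) simp
  with split show ?thesis by metis
qed

lemma submatrix_regular_mat_wrap:
  assumes I: "sorted_wrt (<) I" "set I \<subseteq> {..<q}" "length I = n"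
    and J: "sorted_wrt (<) J" "set J \<subseteq> {..<q}" "length J = n"
    and image: "cyclic_shift q ` set J = set I" and wrap: "q - 1 \<in> set J"
  shows "submatrix (regular_mat q) (set I) (set J) = (regular_mat n :: 'a::field mat)"
proof -
  define J' where "J' = butlast J"
  have J_eq: "J = J' @ [q - 1]" unfolding J'_def by (rule strict_sorted_split_last[OF J(1,2) wrap])
  hence J': "sorted_wrt (<) J'" "\<forall>x\<in>set J'. x < q - 1" "length J' = n - 1"
    using J(1,3) by (auto simp: sorted_wrt_append)
  have shift: "cyclic_shift q x = Suc x" if "x \<in> set J'" for x
    using that J'(2) by (intro cyclic_shift_below) auto
  have "cyclic_shift q (q - 1) = 0" using J(2) wrap by (auto simp: cyclic_shift_def)
  hence "set (0 # map Suc J') = set I" using image shift unfolding J_eq by (auto simp: image_iff)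
  hence I_eq: "I = 0 # map Suc J'"
    using strict_sorted_equal[OF _ I(1)] J'(1) by (simp add: sorted_wrt_map)
  show ?thesis unfolding regular_mat_cyclic_shift submatrix_perm_mat[OF I J]
  proof (rule eq_matI)
    fix a b assume "a < dim_row (perm_mat n (cyclic_shift n) :: 'a mat)" "b < dim_col (perm_mat n (cyclic_shift n) :: 'a mat)"
    hence a: "a < n" and b: "b < n" by auto
    have Jb: "J ! b = (if b < n - 1 then J' ! b else q - 1)"
      unfolding J_eq using b J'(3) by (simp add: nth_append)
    have Ia: "I ! a = (if a = 0 then 0 else Suc (J' ! (a - 1)))"
      unfolding I_eq using a J'(3) by (cases a) simp_all
    have "cyclic_shift q (J ! b) = I ! a \<longleftrightarrow> cyclic_shift n b = a"
    proof (cases "b < n - 1")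
      case True
      have lhs: "cyclic_shift q (J ! b) = Suc (J' ! b)" using True shift[of "J' ! b"] J'(3) Jb by simp
      have rhs: "cyclic_shift n b = Suc b" using True by (intro cyclic_shift_below) linarith
      show ?thesis
      proof (cases a)
        case (Suc a')
        have "distinct J'" using J'(1) by (simp add: strict_sorted_iff)
        hence "J' ! b = J' ! a' \<longleftrightarrow> b = a'"
          using nth_eq_iff_index_eq[of J' b a'] True a Suc J'(3) by simp
        thus ?thesis unfolding lhs rhs Ia using Suc by simp
      qed (use Ia lhs rhs in auto)
    next
      case False
      hence "b = n - 1" "0 < n" using b by auto
      hence "cyclic_shift n b = 0" by (simp add: cyclic_shift_def)
      thus ?thesis using False \<open>cyclic_shift q (q - 1) = 0\<close> unfolding Jb Ia by auto
    qed
    thus "mat n n (\<lambda>(a,b). if cyclic_shift q (J ! b) = I ! a then 1 else 0) $$ (a,b)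
      = (perm_mat n (cyclic_shift n) :: 'a mat) $$ (a,b)"
      using a b by simp
  qed simp_all
qed

lemma det_submatrix_regular_mat:
  assumes I: "sorted_wrt (<) I" "set I \<subseteq> {..<q}" "length I = n"
    and J: "sorted_wrt (<) J" "set J \<subseteq> {..<q}" "length J = n"
  shows "det (submatrix (regular_mat q :: 'a::field mat) (set I) (set J))
    = (if cyclic_shift q ` set J = set I then if q - 1 \<in> set J then (-1) ^ (n - 1) else 1 else 0)"
proof (cases "cyclic_shift q ` set J = set I")
  case False
  have card: "card (set K) = n" if "sorted_wrt (<) K" "length K = n" for K :: "nat list"
    using that by (simp add: strict_sorted_iff distinct_card)
  have "\<not> cyclic_shift q ` set J \<subseteq> set I"
  proof
    assume "cyclic_shift q ` set J \<subseteq> set I"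
    moreover have "card (cyclic_shift q ` set J) = card (set I)"
      using card[OF I(1,3)] card[OF J(1,3)] J(2)
        card_image[OF inj_on_subset[OF permutes_inj[OF cyclic_shift_permutes]]] by simp
    ultimately show False using False by (simp add: card_subset_eq)
  qed
  then obtain x where "x \<in> set J" "cyclic_shift q x \<notin> set I" by auto
  then obtain b where b: "b < n" "cyclic_shift q (J ! b) \<notin> set I"
    using J(3) by (auto simp: in_set_conv_nth)
  have "det (submatrix (regular_mat q :: 'a mat) (set I) (set J)) = 0"
    unfolding regular_mat_cyclic_shift submatrix_perm_mat[OF I J]
    by (rule det_zero_column[OF _ b(1)]) (use b I(3) in auto)
  with False show ?thesis by simp
next
  case True
  show ?thesis
  proof (cases "q - 1 \<in> set J")
    case wrap: True
    have "0 < n" using wrap J(3) by (cases J) auto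
    thus ?thesis using True wrap
      by (simp add: submatrix_regular_mat_wrap[OF I J True wrap, where 'a = 'a] det_regular_mat)
  qed (use True in \<open>simp add: submatrix_regular_mat_no_wrap[OF I J True, where 'a = 'a]\<close>)
qed

lemma ext_pow_regular_mat_index:
  assumes i: "i < length (nsubsets n q)" and j: "j < length (nsubsets n q)"
  shows "ext_pow n (regular_mat q :: 'a::field mat) $$ (i,j) =
    (if nsubset_perm n q (cyclic_shift q) j = i then if q - 1 \<in> nsubset n q j then (-1) ^ (n - 1) else 1 else 0)"
proof -
  note shift = nsubset_perm_apply[OF cyclic_shift_permutes j]
  have "cyclic_shift q ` nsubset n q j = nsubset n q i \<longleftrightarrow> nsubset_perm n q (cyclic_shift q) j = i"
    using shift nsubset_inj[OF shift(1) i] by auto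
  moreover have "ext_pow n (regular_mat q :: 'a mat) $$ (i,j)
      = det (submatrix (regular_mat q :: 'a mat) (nsubset n q i) (nsubset n q j))"
    using i j by (simp add: ext_pow_def Let_def regular_mat_cyclic_shift nsubset_def)
  moreover have "\<dots> = (if cyclic_shift q ` nsubset n q j = nsubset n q i
      then if q - 1 \<in> nsubset n q j then (-1) ^ (n - 1) else 1 else 0)"
    unfolding nsubset_def by (rule det_submatrix_regular_mat[OF nsubsets_nth[OF i] nsubsets_nth[OF j]])
  ultimately show ?thesis by simp
qed

(* Shifting adds 1 to every element of J, except that q - 1 goes to 0. *)
lemma neg_one_power_cyclic_shift_sum:
  fixes J :: "nat set"
  assumes J: "J \<subseteq> {..<q}" "card J = n" and q: "odd q \<or> (-1 :: 'a :: comm_ring_1) = 1"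
  shows "(-1 :: 'a) ^ ((n - 1) * \<Sum>(cyclic_shift q ` J)) * (-1) ^ ((n - 1) * \<Sum>J)
    = (if q - 1 \<in> J then (-1) ^ (n - 1) else 1)"
proof -
  define t where "t = (if q - 1 \<in> J then 1 else 0 :: nat)"
  have fin: "finite J" using J(1) finite_subset by blast
  have "\<Sum>(cyclic_shift q ` J) = (\<Sum>x\<in>J. cyclic_shift q x)"
    using J(1) by (intro sum.reindex_cong[OF inj_on_subset[OF permutes_inj[OF cyclic_shift_permutes]]]) auto
  also have "(\<Sum>x\<in>J. cyclic_shift q x) + q * t = (\<Sum>x\<in>J. cyclic_shift q x + (if x = q - 1 then q else 0))"
    using fin by (simp add: sum.distrib t_def)
  also have "\<dots> = (\<Sum>x\<in>J. x + 1)"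
    by (rule sum.cong) (use J(1) in \<open>auto simp: cyclic_shift_def\<close>)
  also have "\<dots> = \<Sum>J + n" using J(2) by (subst sum.distrib) simp
  finally have sums: "\<Sum>(cyclic_shift q ` J) + q * t = \<Sum>J + n" .
  have "even ((n - 1) * \<Sum>(cyclic_shift q ` J) + (n - 1) * \<Sum>J) = even ((n - 1) * t)" if "odd q"
  proof (cases "even (n - 1)")
    case False
    hence "even n" by (cases n) auto
    with sums that show ?thesis
      by (simp flip: distrib_left) (metis even_add even_mult_iff)
  qed simp
  hence "(-1 :: 'a) ^ ((n - 1) * \<Sum>(cyclic_shift q ` J) + (n - 1) * \<Sum>J) = (-1) ^ ((n - 1) * t)"
    using q by (auto simp: minus_one_power_iff)
  thus ?thesis by (simp add: power_add t_def)
qed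

lemma similar_mat_sign_twist:
  assumes P: "P \<in> carrier_mat m m" and d: "\<And>i. d i * d i = (1::'a::field)"
  shows "similar_mat (mat m m (\<lambda>(i,j). d i * P $$ (i,j) * d j)) P"
proof -
  have inverse: "mat_diag m d * mat_diag m d = 1\<^sub>m m" using d by simp
  have "mat m m (\<lambda>(i,j). d i * P $$ (i,j) * d j) = mat_diag m d * P * mat_diag m d"
    using P by (simp add: mat_diag_mult_left mat_diag_mult_right[of _ m]) (rule eq_matI; simp)
  from similar_mat_witI[OF inverse inverse this _ P mat_diag_dim mat_diag_dim]
  have "similar_mat_wit (mat m m (\<lambda>(i,j). d i * P $$ (i,j) * d j)) P (mat_diag m d) (mat_diag m d)"
    by simp
  thus ?thesis unfolding similar_mat_def by blast
qed

lemma odd_or_neg_one_eq_one: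
  assumes p: "prime (CHAR('a::comm_ring_1))" and q: "q = CHAR('a) ^ k"
  shows "odd q \<or> (-1 :: 'a) = 1"
proof (cases "CHAR('a) = 2")
  case True
  have "(1 :: 'a) + 1 = 0" using True of_nat_eq_0_iff_char_dvd[of 2, where 'a = 'a] by simp
  hence "(-1 :: 'a) = 1" by (simp add: neg_eq_iff_add_eq_0)
  thus ?thesis ..
next
  case False
  have "2 < CHAR('a)" using prime_ge_2_nat[OF p] False by linarith
  hence "odd (CHAR('a))" using prime_odd_nat[OF p] by blast
  thus ?thesis using q by simp
qed

lemma ext_pow_regular_mat_similar_perm_mat:
  assumes p: "prime (CHAR('a::field))" and q: "q = CHAR('a) ^ k"
  shows "similar_mat (ext_pow n (regular_mat q :: 'a mat))
    (perm_mat (length (nsubsets n q)) (nsubset_perm n q (cyclic_shift q)))"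
proof -
  let ?N = "length (nsubsets n q)" and ?\<tau> = "nsubset_perm n q (cyclic_shift q)"
  define d where "d j = (-1 :: 'a) ^ ((n - 1) * \<Sum>(nsubset n q j))" for j
  have "ext_pow n (regular_mat q :: 'a mat) = mat ?N ?N (\<lambda>(i,j). d i * perm_mat ?N ?\<tau> $$ (i,j) * d j)"
  proof (rule eq_matI)
    fix i j assume "i < dim_row (mat ?N ?N (\<lambda>(i,j). d i * perm_mat ?N ?\<tau> $$ (i,j) * (d j :: 'a)))"
      "j < dim_col (mat ?N ?N (\<lambda>(i,j). d i * perm_mat ?N ?\<tau> $$ (i,j) * (d j :: 'a)))"
    hence i: "i < ?N" and j: "j < ?N" by auto
    have "d (?\<tau> j) * d j = (if q - 1 \<in> nsubset n q j then (-1) ^ (n - 1) else 1)"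
      unfolding d_def nsubset_perm_apply(2)[OF cyclic_shift_permutes j]
      by (rule neg_one_power_cyclic_shift_sum[OF nsubset_bounded[OF j] odd_or_neg_one_eq_one[OF p q]])
    thus "ext_pow n (regular_mat q :: 'a mat) $$ (i,j) = mat ?N ?N (\<lambda>(i,j). d i * perm_mat ?N ?\<tau> $$ (i,j) * d j) $$ (i,j)"
      using i j by (auto simp: ext_pow_regular_mat_index)
  qed (simp_all add: ext_pow_def Let_def regular_mat_cyclic_shift)
  moreover have "d j * d j = 1" for j
    by (simp add: d_def flip: power_add)
  ultimately show ?thesis using similar_mat_sign_twist[of "perm_mat ?N ?\<tau>" ?N d] by simp
qed

theorem lemma4p3:
  fixes p q k n :: nat
  assumes "prime p" and "CHAR('a::field) = p" and "q = p ^ k"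
  shows "\<exists>f. green (ext_pow n (regular_mat q :: 'a mat)) f \<and> in_PKC TYPE('a) q f \<and>
           f 1 = (if n = 0 \<or> n = q then 1 else 0)"
proof -
  have p: "prime (CHAR('a))" and q: "q = CHAR('a) ^ k" using assms by simp_all
  let ?N = "length (nsubsets n q)" and ?\<tau> = "nsubset_perm n q (cyclic_shift q)"
  have C_set: "is_C_set q ?N ?\<tau>" by (rule is_C_set_nsubset_perm[OF is_C_set_cyclic_shift])
  obtain n_as where jnf: "jordan_nf (perm_mat ?N ?\<tau> :: 'a mat) n_as" and ev: "\<forall>(k,a)\<in>set n_as. a = 1"
    and fixed: "length (filter (\<lambda>(k,a). k = 1) n_as) = card {x. x < ?N \<and> ?\<tau> x = x}"
    using perm_mat_jordan_nf[OF p q C_set] by blast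
  define f where "f r = int (length (filter (\<lambda>(k,a). k = r) n_as))" for r
  have "jordan_nf (ext_pow n (regular_mat q :: 'a mat)) n_as"
    by (rule jordan_nf_similar[OF ext_pow_regular_mat_similar_perm_mat[OF p q] jnf])
  hence green: "green (ext_pow n (regular_mat q :: 'a mat)) f" unfolding green_def f_def using ev by blast
  have PKC: "in_PKC TYPE('a) q f"
    unfolding in_PKC_def green_def using C_set jnf ev
    by (intro exI[of _ "[(1, ?N, ?\<tau>)]"] exI[of _ "[f]"]) (auto simp: f_def)
  have "0 < q" using p q by (simp add: prime_gt_0_nat)
  have "f 1 = int (card {x. x < ?N \<and> ?\<tau> x = x})" unfolding f_def fixed ..
  also have "\<dots> = (if n = 0 \<or> n = q then 1 else 0)"
    using card_fixpoints_nsubset_perm_cyclic_shift[OF \<open>0 < q\<close>, of n] by simp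
  finally show ?thesis using green PKC by blast
qed

end
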